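(* Define $\mathrm{CS}:Q\to\mathbb{R}$ by $\mathrm{CS}(q)=\int_{p(q)/q}^{1}(vq-p(q))f(v)\,dv$. Then $\mathrm{CS}$ is convex on $Q$ if and only if \[ r(v)r''(v)+r'(v)\le 1 \quad\text{for all } v\in\big(\overline p(q_h),\overline p(q_\ell)\big). \]
   Context: Let $0<q_\ell<q_h<\infty$, $Q=[q_\ell,q_h]$, and let $c$ be a real number with $0<c<q_\ell$. Let $F$ be a probability distribution on $[0,1]$ with support $[0,1]$ admitting a twice continuously differentiable density $f:(0,1)\to\mathbb{R}_{>0}$. Define $r(v)=(1-F(v))/f(v)$ and $\psi(v)=v-r(v)$ on $(0,1)$, and assume $\psi'(v)>0$ whenever $\psi(v)>0$. For $q\in Q$, $p(q)$ is the unique maximizer over $p\in\mathbb{R}$ of $(p-c)\big(1-F(p/q)\big)$, and $\overline p(q)=p(q)/q$. *)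

theory Defs
  imports "HOL-Analysis.Analysis"
begin

definition profit :: "(real \<Rightarrow> real) \<Rightarrow> real \<Rightarrow> real \<Rightarrow> real \<Rightarrow> real" where
  "profit F c q p = (p - c) * (1 - F (p / q))"

definition opt_price :: "(real \<Rightarrow> real) \<Rightarrow> real \<Rightarrow> real \<Rightarrow> real" where
  "opt_price F c q = (THE p. \<forall>p'. profit F c q p' \<le> profit F c q p)"

definition opt_price_bar :: "(real \<Rightarrow> real) \<Rightarrow> real \<Rightarrow> real \<Rightarrow> real" where
  "opt_price_bar F c q = opt_price F c q / q"

definition inv_hazard :: "(real \<Rightarrow> real) \<Rightarrow> (real \<Rightarrow> real) \<Rightarrow> real \<Rightarrow> real" where
  "inv_hazard F f v = (1 - F v) / f v"

definition virt_val :: "(real \<Rightarrow> real) \<Rightarrow> (real \<Rightarrow> real) \<Rightarrow> real \<Rightarrow> real" where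
  "virt_val F f v = v - inv_hazard F f v"

definition CS :: "(real \<Rightarrow> real) \<Rightarrow> (real \<Rightarrow> real) \<Rightarrow> real \<Rightarrow> real \<Rightarrow> real" where
  "CS F f c q = integral {opt_price F c q / q..1} (\<lambda>v. (v * q - opt_price F c q) * f v)"

end

theory Submission
  imports Defs
begin

(* With x = pbar q, the first-order condition for the optimal price reads psi x = c / q, so pbar
   is strictly decreasing and q * pbar' q = - psi x / psi' x. Writing CS q = q * G (pbar q) with
   G x the integral of 1 - F over [x, 1], one gets CS' q = H (pbar q) for
   H x = G x + (1 - F x) * psi x / psi' x, and H' x = - f psi (psi' - r r'') / psi'^2 where
   psi' = 1 - r'. Hence CS'' q = H' (pbar q) * pbar' q is nonnegative exactly when
   r r'' + r' <= 1 at pbar q, and pbar maps (q_l, q_h) onto (pbar q_h, pbar q_l). *)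

lemma DERIV_pos_where_pos_imp_nondecreasing:
  fixes g g' :: "real \<Rightarrow> real"
  assumes "a \<le> b" and "0 < g a"
    and has_deriv: "\<And>x. x \<in> {a..b} \<Longrightarrow> (g has_real_derivative g' x) (at x)"
    and deriv_pos: "\<And>x. x \<in> {a..b} \<Longrightarrow> 0 < g x \<Longrightarrow> 0 < g' x"
  shows "g a \<le> g b"
proof -
  \<comment> \<open>The largest \<open>s \<in> [a, b]\<close> with \<open>g a \<le> g s\<close> is \<open>b\<close>: otherwise \<open>g s > 0\<close>
     forces \<open>g' s > 0\<close>, and \<open>g\<close> exceeds \<open>g a\<close> just to the right of \<open>s\<close>.\<close>
  define L where "L = {y \<in> {a..b}. g a \<le> g y}"
  have "continuous_on {a..b} g"
    using has_deriv by (meson DERIV_isCont continuous_at_imp_continuous_on)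
  then have "closed L"
    unfolding L_def by (intro continuous_on_closed_Collect_le continuous_on_const) auto
  moreover have "bounded L"
    by (rule bounded_subset[of "{a..b}"]) (auto simp: L_def)
  ultimately have "compact L"
    by (simp add: compact_eq_bounded_closed)
  moreover have "a \<in> L"
    using \<open>a \<le> b\<close> by (simp add: L_def)
  ultimately obtain s where "s \<in> L" and s_max: "\<And>t. t \<in> L \<Longrightarrow> t \<le> s"
    using compact_attains_sup[of L] by blast
  then have s: "s \<in> {a..b}" "g a \<le> g s"
    by (auto simp: L_def)
  have "s = b"
  proof (rule ccontr)
    assume "s \<noteq> b"
    with s have "s < b" by simp
    from s \<open>0 < g a\<close> have "0 < g' s"
      by (intro deriv_pos) auto
    from DERIV_pos_inc_right[OF has_deriv[OF \<open>s \<in> {a..b}\<close>] this]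
    obtain d where "d > 0" and inc: "\<And>h. 0 < h \<Longrightarrow> h < d \<Longrightarrow> g s < g (s + h)"
      by blast
    define h where "h = min d (b - s) / 2"
    have h: "0 < h" "h < d" "s + h \<le> b"
      using \<open>d > 0\<close> \<open>s < b\<close> by (simp_all add: h_def min_def field_simps)
    with s inc[of h] have "s + h \<in> L"
      by (auto simp: L_def)
    with s_max[of "s + h"] h show False
      by simp
  qed
  with s show ?thesis
    by simp
qed

lemma DERIV_pos_where_pos_imp_increasing:
  fixes g g' :: "real \<Rightarrow> real"
  assumes "a < b" and "0 < g a"
    and has_deriv: "\<And>x. x \<in> {a..b} \<Longrightarrow> (g has_real_derivative g' x) (at x)"
    and deriv_pos: "\<And>x. x \<in> {a..b} \<Longrightarrow> 0 < g x \<Longrightarrow> 0 < g' x"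
  shows "g a < g b"
proof -
  have a: "a \<in> {a..b}"
    using \<open>a < b\<close> by simp
  from DERIV_pos_inc_right[OF has_deriv[OF a] deriv_pos[OF a \<open>0 < g a\<close>]]
  obtain d where "d > 0" and inc: "\<And>h. 0 < h \<Longrightarrow> h < d \<Longrightarrow> g a < g (a + h)"
    by blast
  define h where "h = min d (b - a) / 2"
  have h: "0 < h" "h < d" "a + h \<le> b"
    using \<open>d > 0\<close> \<open>a < b\<close> by (simp_all add: h_def min_def field_simps)
  have "g a < g (a + h)"
    using inc h by simp
  also have "\<dots> \<le> g b"
  proof (rule DERIV_pos_where_pos_imp_nondecreasing[where g = g and g' = g' and a = "a + h"])
    show "a + h \<le> b" "0 < g (a + h)"
      using h \<open>0 < g a\<close> \<open>g a < g (a + h)\<close> by simp_all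
    show "(g has_real_derivative g' x) (at x)" if "x \<in> {a + h..b}" for x
      using that h by (intro has_deriv) simp
    show "0 < g' x" if "x \<in> {a + h..b}" "0 < g x" for x
      using that h by (intro deriv_pos) simp_all
  qed
  finally show ?thesis .
qed

lemma convex_on_imp_deriv_mono:
  fixes g :: "real \<Rightarrow> real"
  assumes "convex_on A g" and "connected A" and "x \<in> interior A" and "y \<in> interior A" and "x \<le> y"
    and "(g has_real_derivative g'x) (at x)" and "(g has_real_derivative g'y) (at y)"
  shows "g'x \<le> g'y"
proof -
  have A: "x \<in> A" "y \<in> A"
    using assms(3,4) interior_subset by auto
  have "g'x * (y - x) \<le> g y - g x"
    using has_field_derivative_at_within[OF assms(6)]
    by (rule convex_on_imp_above_tangent[OF assms(1-3) A(2)])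
  moreover have "g'y * (x - y) \<le> g x - g y"
    using has_field_derivative_at_within[OF assms(7)]
    by (rule convex_on_imp_above_tangent[OF assms(1,2,4) A(1)])
  ultimately have "g'x * (y - x) \<le> g'y * (y - x)"
    by (simp add: algebra_simps)
  show ?thesis
  proof (cases "x = y")
    case True
    then show ?thesis
      using DERIV_unique[OF assms(6)] assms(7) by simp
  next
    case False
    with \<open>g'x * (y - x) \<le> g'y * (y - x)\<close> \<open>x \<le> y\<close> show ?thesis
      by simp
  qed
qed

lemma convex_on_Icc_iff_deriv2_nonneg:
  fixes g g' g'' :: "real \<Rightarrow> real"
  assumes g': "\<And>x. x \<in> {a..b} \<Longrightarrow> (g has_real_derivative g' x) (at x)"
    and g'': "\<And>x. x \<in> {a..b} \<Longrightarrow> (g' has_real_derivative g'' x) (at x)"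
  shows "convex_on {a..b} g \<longleftrightarrow> (\<forall>x \<in> {a<..<b}. 0 \<le> g'' x)"
proof
  assume "convex_on {a..b} g"
  then have mono: "mono_on {a<..<b} g'"
    by (intro mono_onI, rule convex_on_imp_deriv_mono[where A = "{a..b}" and g = g]) (auto intro: g')
  show "\<forall>x \<in> {a<..<b}. 0 \<le> g'' x"
  proof
    fix x assume "x \<in> {a<..<b}"
    then show "0 \<le> g'' x"
      by (intro mono_on_imp_deriv_nonneg[OF mono g'']) auto
  qed
next
  assume nonneg: "\<forall>x \<in> {a<..<b}. 0 \<le> g'' x"
  show "convex_on {a..b} g"
  proof (rule convex_on_realI[where f' = g'])
    fix x y assume xy: "x \<in> {a..b}" "y \<in> {a..b}" "x \<le> y"
    have "{x..y} \<subseteq> {a..b}"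
      using xy by auto
    then have "continuous_on {x..y} g'"
      using g'' by (meson DERIV_isCont continuous_at_imp_continuous_on subsetD)
    moreover have "\<exists>D. (g' has_real_derivative D) (at z) \<and> 0 \<le> D" if "x < z" "z < y" for z
      using that xy nonneg g''[of z] by auto
    ultimately show "g' x \<le> g' y"
      using \<open>x \<le> y\<close> by (intro DERIV_nonneg_imp_increasing_open[where f = g'])
  qed (use g' in auto)
qed

locale quality_pricing =
  fixes F f :: "real \<Rightarrow> real" and c :: real
  assumes c_pos: "0 < c"
    and F_cont: "continuous_on UNIV F"
    and F_low: "\<And>v. v \<le> 0 \<Longrightarrow> F v = 0"
    and F_high: "\<And>v. 1 \<le> v \<Longrightarrow> F v = 1"
    and F_dens: "\<And>v. v \<in> {0<..<1} \<Longrightarrow> (F has_real_derivative f v) (at v)"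
    and f_pos: "\<And>v. v \<in> {0<..<1} \<Longrightarrow> f v > 0"
    and f_diff: "\<And>v. v \<in> {0<..<1} \<Longrightarrow> f differentiable (at v)"
    and f'_diff: "\<And>v. v \<in> {0<..<1} \<Longrightarrow> (deriv f) differentiable (at v)"
    and psi_mono: "\<And>v. v \<in> {0<..<1} \<Longrightarrow> virt_val F f v > 0 \<Longrightarrow>
                     deriv (virt_val F f) v > 0"
begin

abbreviation "r \<equiv> inv_hazard F f"
abbreviation "\<psi> \<equiv> virt_val F f"
abbreviation "pbar \<equiv> opt_price_bar F c"

lemma F_continuous_on: "continuous_on A F"
  using continuous_on_subset[OF F_cont subset_UNIV] .

lemma F_strict_bounds:
  assumes "v \<in> {0<..<1}"
  shows "0 < F v" and "F v < 1"
proof -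
  have "\<exists>y. (F has_real_derivative y) (at x) \<and> 0 < y" if "0 < x" "x < 1" for x
    using F_dens f_pos that by auto
  then have "F 0 < F v" "F v < F 1"
    using assms by (auto intro!: DERIV_pos_imp_increasing_open[where f = F] F_continuous_on)
  then show "0 < F v" "F v < 1"
    using F_low[of 0] F_high[of 1] by simp_all
qed

lemma F_le_1: "F v \<le> 1"
  using F_strict_bounds[of v] F_low[of v] F_high[of v] by (cases "v \<le> 0"; cases "1 \<le> v") auto

lemma inv_hazard_pos: "v \<in> {0<..<1} \<Longrightarrow> 0 < r v"
  using F_strict_bounds[of v] f_pos[of v] by (simp add: inv_hazard_def)

lemma one_minus_F_eq: "v \<in> {0<..<1} \<Longrightarrow> 1 - F v = r v * f v"
  using f_pos[of v] by (simp add: inv_hazard_def)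

lemma inv_hazard_has_deriv:
  assumes "v \<in> {0<..<1}"
  shows "(r has_real_derivative (- f v * f v - (1 - F v) * deriv f v) / (f v * f v)) (at v)"
proof -
  have "((\<lambda>v. (1 - F v) / f v) has_real_derivative
      ((0 - f v) * f v - (1 - F v) * deriv f v) / (f v * f v)) (at v)"
    using assms f_pos[OF assms]
    by (intro DERIV_divide DERIV_diff DERIV_const F_dens
        DERIV_deriv_iff_real_differentiable[THEN iffD2] f_diff) auto
  then show ?thesis
    by (simp add: inv_hazard_def[abs_def])
qed

lemma inv_hazard_deriv: "v \<in> {0<..<1} \<Longrightarrow> (r has_real_derivative deriv r v) (at v)"
  using inv_hazard_has_deriv DERIV_imp_deriv by metis

lemma deriv_inv_hazard_deriv:
  assumes v: "v \<in> {0<..<1}"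
  shows "(deriv r has_real_derivative deriv (deriv r) v) (at v)"
proof -
  define E where "E w = (- f w * f w - (1 - F w) * deriv f w) / (f w * f w)" for w
  have E_eq: "E w = deriv r w" if "w \<in> {0<..<1}" for w
    using DERIV_imp_deriv[OF inv_hazard_has_deriv[OF that]] by (simp add: E_def)
  have "F differentiable (at v)"
    using F_dens[OF v] real_differentiable_def by blast
  then have "E differentiable (at v)"
    unfolding E_def[abs_def] using v f_pos[OF v]
    by (intro differentiable_divide differentiable_diff differentiable_mult differentiable_minus
        differentiable_const f_diff f'_diff) auto
  then obtain D where "(E has_real_derivative D) (at v)"
    using real_differentiable_def by blast
  then have "(deriv r has_real_derivative D) (at v)"
    by (rule has_field_derivative_transform_within_open[OF _ open_greaterThanLessThan v]) (rule E_eq)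
  then show ?thesis
    using DERIV_deriv_iff_real_differentiable real_differentiable_def by blast
qed

lemma virt_val_has_deriv: "v \<in> {0<..<1} \<Longrightarrow> (\<psi> has_real_derivative 1 - deriv r v) (at v)"
  unfolding virt_val_def[abs_def] by (intro DERIV_diff DERIV_ident inv_hazard_deriv)

lemma deriv_virt_val: "v \<in> {0<..<1} \<Longrightarrow> deriv \<psi> v = 1 - deriv r v"
  using virt_val_has_deriv DERIV_imp_deriv by blast

lemma virt_val_deriv: "v \<in> {0<..<1} \<Longrightarrow> (\<psi> has_real_derivative deriv \<psi> v) (at v)"
  using virt_val_has_deriv deriv_virt_val by simp

lemma deriv_virt_val_deriv:
  assumes v: "v \<in> {0<..<1}"
  shows "(deriv \<psi> has_real_derivative - deriv (deriv r) v) (at v)"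
proof -
  have "((\<lambda>v. 1 - deriv r v) has_real_derivative - deriv (deriv r) v) (at v)"
    using DERIV_diff[OF DERIV_const deriv_inv_hazard_deriv[OF v]] by simp
  then show ?thesis
    by (rule has_field_derivative_transform_within_open[OF _ open_greaterThanLessThan v])
       (simp add: deriv_virt_val)
qed

lemma virt_val_less_1: "v \<in> {0<..<1} \<Longrightarrow> \<psi> v < 1"
  using inv_hazard_pos[of v] by (simp add: virt_val_def)

lemma virt_val_strict_mono:
  assumes "0 < a" "a < x" "x < 1" "0 < \<psi> a"
  shows "\<psi> a < \<psi> x"
  using assms
  by (intro DERIV_pos_where_pos_imp_increasing[where g = \<psi> and g' = "deriv \<psi>"]
      virt_val_deriv psi_mono) auto

lemma virt_val_inj:
  assumes "v \<in> {0<..<1}" "w \<in> {0<..<1}" "\<psi> v = \<psi> w" "0 < \<psi> v"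
  shows "v = w"
  using virt_val_strict_mono[of v w] virt_val_strict_mono[of w v] assms
  by (cases v w rule: linorder_cases) auto

lemma profit_nonpos:
  assumes "0 < q" and "p \<le> c \<or> q \<le> p"
  shows "profit F c q p \<le> 0"
  using assms(2)
proof
  assume "p \<le> c"
  then show ?thesis
    unfolding profit_def using F_le_1[of "p / q"] by (intro mult_nonpos_nonneg) auto
next
  assume "q \<le> p"
  then show ?thesis
    using \<open>0 < q\<close> F_high[of "p / q"] by (simp add: profit_def)
qed

lemma profit_midpoint_pos:
  assumes "c < q"
  shows "0 < profit F c q ((c + q) / 2)"
proof -
  have "(c + q) / 2 / q \<in> {0<..<1}"
    using assms c_pos by (auto simp: field_simps)
  then show ?thesis
    using F_strict_bounds assms by (auto simp: profit_def)
qed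

lemma profit_has_max:
  assumes "c < q"
  shows "\<exists>p. \<forall>p'. profit F c q p' \<le> profit F c q p"
proof -
  have "continuous_on {c..q} (\<lambda>p. p / q)"
    using assms c_pos by (intro continuous_intros) auto
  then have "continuous_on {c..q} (\<lambda>p. F (p / q))"
    by (rule continuous_on_compose2[OF F_cont]) simp
  then have "continuous_on {c..q} (profit F c q)"
    unfolding profit_def[abs_def] by (intro continuous_intros)
  moreover have "{c..q} \<noteq> {}"
    using assms by simp
  ultimately obtain p where p_max: "\<And>p'. p' \<in> {c..q} \<Longrightarrow> profit F c q p' \<le> profit F c q p"
    using continuous_attains_sup[OF compact_Icc] by blast
  have "0 < profit F c q p"
    using profit_midpoint_pos[OF assms] p_max[of "(c + q) / 2"] assms by simp
  have "profit F c q p' \<le> profit F c q p" for p'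
  proof (cases "p' \<in> {c..q}")
    case True
    then show ?thesis
      by (rule p_max)
  next
    case False
    then have "profit F c q p' \<le> 0"
      using assms c_pos by (intro profit_nonpos) auto
    with \<open>0 < profit F c q p\<close> show ?thesis
      by simp
  qed
  then show ?thesis
    by blast
qed

lemma profit_max_imp_virt_val_eq:
  assumes "c < q" and p_max: "\<forall>p'. profit F c q p' \<le> profit F c q p"
  shows "p / q \<in> {0<..<1}" and "\<psi> (p / q) = c / q"
proof -
  have "0 < q"
    using assms c_pos by simp
  have "0 < profit F c q p"
    using profit_midpoint_pos[OF \<open>c < q\<close>] p_max by (meson less_le_trans)
  then have "c < p" "p < q"
    using profit_nonpos[OF \<open>0 < q\<close>, of p] by linarith+
  then show v: "p / q \<in> {0<..<1}"
    using \<open>0 < q\<close> c_pos by (auto simp: field_simps)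
  have "((\<lambda>p. p / q) has_real_derivative 1 / q) (at p)"
    using DERIV_cdivide[OF DERIV_ident, of q p] by simp
  then have "((\<lambda>p. F (p / q)) has_real_derivative f (p / q) * (1 / q)) (at p)"
    by (rule DERIV_chain2[where f = F and g = "\<lambda>p. p / q", OF F_dens[OF v]])
  then have "(profit F c q has_real_derivative
      (1 - 0) * (1 - F (p / q)) + (0 - f (p / q) * (1 / q)) * (p - c)) (at p)"
    unfolding profit_def[abs_def] by (intro DERIV_mult DERIV_diff DERIV_ident DERIV_const)
  then have "(1 - 0) * (1 - F (p / q)) + (0 - f (p / q) * (1 / q)) * (p - c) = 0"
    by (rule DERIV_local_max[of _ _ _ 1]) (use p_max in auto)
  then have "r (p / q) * f (p / q) = (p - c) / q * f (p / q)"
    using one_minus_F_eq[OF v] by (simp add: algebra_simps)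
  then have "r (p / q) = (p - c) / q"
    using f_pos[OF v] by (metis mult_cancel_right order_less_irrefl)
  then show "\<psi> (p / q) = c / q"
    by (simp add: virt_val_def diff_divide_distrib)
qed

lemma opt_price_bar_char:
  assumes "c < q"
  shows "pbar q \<in> {0<..<1}" and "\<psi> (pbar q) = c / q"
proof -
  let ?is_max = "\<lambda>p. \<forall>p'. profit F c q p' \<le> profit F c q p"
  obtain p where p: "?is_max p"
    using profit_has_max[OF assms] by blast
  have "p' = p" if "?is_max p'" for p'
  proof -
    have "p' / q = p / q"
      by (rule virt_val_inj)
        (use profit_max_imp_virt_val_eq[OF assms p] profit_max_imp_virt_val_eq[OF assms that]
          assms c_pos in auto)
    then show ?thesis
      using assms c_pos by simp
  qed
  then have "opt_price F c q = p"
    unfolding opt_price_def using p by (intro the_equality)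
  then show "pbar q \<in> {0<..<1}" "\<psi> (pbar q) = c / q"
    using profit_max_imp_virt_val_eq[OF assms p] by (simp_all add: opt_price_bar_def)
qed

lemma virt_val_opt_price_bar_pos: "c < q \<Longrightarrow> 0 < \<psi> (pbar q)"
  using opt_price_bar_char[of q] c_pos by simp

lemma deriv_virt_val_opt_price_bar_pos: "c < q \<Longrightarrow> 0 < deriv \<psi> (pbar q)"
  using opt_price_bar_char psi_mono virt_val_opt_price_bar_pos by blast

lemma opt_price_bar_eqI:
  assumes "c < q" "w \<in> {0<..<1}" "\<psi> w = c / q"
  shows "pbar q = w"
  by (rule virt_val_inj) (use opt_price_bar_char[OF assms(1)] assms c_pos in auto)

lemma opt_price_bar_virt_val:
  assumes "v \<in> {0<..<1}" "0 < \<psi> v"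
  shows "c < c / \<psi> v" and "pbar (c / \<psi> v) = v"
proof -
  show "c < c / \<psi> v"
    using virt_val_less_1[OF assms(1)] assms c_pos by (simp add: field_simps)
  show "pbar (c / \<psi> v) = v"
    by (rule opt_price_bar_eqI) (use \<open>c < c / \<psi> v\<close> assms c_pos in auto)
qed

lemma opt_price_bar_strict_antimono:
  assumes "c < q1" "q1 < q2"
  shows "pbar q2 < pbar q1"
proof (rule ccontr)
  have q1: "pbar q1 \<in> {0<..<1}" "\<psi> (pbar q1) = c / q1" "0 < \<psi> (pbar q1)"
    using assms opt_price_bar_char virt_val_opt_price_bar_pos by auto
  have q2: "pbar q2 \<in> {0<..<1}" "\<psi> (pbar q2) = c / q2"
    using assms opt_price_bar_char by auto
  assume "\<not> pbar q2 < pbar q1"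
  then have "\<psi> (pbar q1) \<le> \<psi> (pbar q2)"
    using virt_val_strict_mono[of "pbar q1" "pbar q2"] q1 q2 by (cases "pbar q1 = pbar q2") auto
  moreover have "c / q2 < c / q1"
    using assms c_pos by (simp add: frac_less2)
  ultimately show False
    using q1 q2 by simp
qed

lemma opt_price_bar_image:
  assumes "c < a" "a < b"
  shows "pbar ` {a<..<b} = {pbar b<..<pbar a}"
proof
  show "pbar ` {a<..<b} \<subseteq> {pbar b<..<pbar a}"
    using assms by (auto intro!: opt_price_bar_strict_antimono)
next
  show "{pbar b<..<pbar a} \<subseteq> pbar ` {a<..<b}"
  proof
    fix v assume v: "v \<in> {pbar b<..<pbar a}"
    have a: "pbar a \<in> {0<..<1}" "\<psi> (pbar a) = c / a"
      and b: "pbar b \<in> {0<..<1}" "\<psi> (pbar b) = c / b"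
      using assms opt_price_bar_char by auto
    then have v01: "v \<in> {0<..<1}"
      using v by auto
    have "c / b < \<psi> v"
      using virt_val_strict_mono[of "pbar b" v] virt_val_opt_price_bar_pos[of b] assms v a b by auto
    moreover have "0 < c / b"
      using assms c_pos by simp
    ultimately have "0 < \<psi> v"
      by linarith
    have "\<psi> v < c / a"
      using virt_val_strict_mono[of v "pbar a"] \<open>0 < \<psi> v\<close> v a v01 by auto
    with \<open>c / b < \<psi> v\<close> \<open>0 < \<psi> v\<close> assms c_pos have "c / \<psi> v \<in> {a<..<b}"
      by (simp add: pos_less_divide_eq pos_divide_less_eq mult.commute)
    then show "v \<in> pbar ` {a<..<b}"
      using opt_price_bar_virt_val[OF v01 \<open>0 < \<psi> v\<close>] by (metis image_eqI)
  qed
qed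

lemma opt_price_bar_isCont:
  assumes "c < q"
  shows "isCont pbar q"
proof -
  define x where "x = pbar q"
  have x: "x \<in> {0<..<1}" "\<psi> x = c / q"
    using opt_price_bar_char[OF assms] by (simp_all add: x_def)
  have "(\<psi> \<longlongrightarrow> \<psi> x) (nhds x)"
    using DERIV_isCont[OF virt_val_deriv[OF x(1)]] by (simp add: isCont_def tendsto_at_iff_tendsto_nhds)
  moreover have "0 < \<psi> x"
    using x assms c_pos by simp
  ultimately have "\<forall>\<^sub>F z in nhds x. z \<in> {0<..<1} \<and> 0 < \<psi> z"
    using x(1) by (intro eventually_conj eventually_nhds_in_open order_tendstoD(1)) auto
  then obtain d where "0 < d" and near: "\<And>z. dist z x < d \<Longrightarrow> z \<in> {0<..<1} \<and> 0 < \<psi> z"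
    unfolding eventually_nhds_metric by blast
  have "isCont pbar ((\<lambda>v. c / \<psi> v) x)"
  proof (rule isCont_inverse_function[where f = "\<lambda>v. c / \<psi> v" and g = pbar and d = "d / 2"])
    fix z assume "\<bar>z - x\<bar> \<le> d / 2"
    then have z: "z \<in> {0<..<1}" "0 < \<psi> z"
      using near[of z] \<open>0 < d\<close> by (simp_all add: dist_real_def)
    then show "pbar (c / \<psi> z) = z"
      by (rule opt_price_bar_virt_val)
    show "isCont (\<lambda>v. c / \<psi> v) z"
      using z DERIV_isCont[OF virt_val_deriv[OF z(1)]] by (intro continuous_intros) auto
  qed (use \<open>0 < d\<close> in simp)
  then show ?thesis
    using x assms c_pos by (simp add: x_def)
qed

text \<open>Implicit differentiation of \<open>\<psi> (pbar q) = c / q\<close>.\<close>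

definition opt_price_bar_deriv :: "real \<Rightarrow> real" where
  "opt_price_bar_deriv q = - \<psi> (pbar q) / (q * deriv \<psi> (pbar q))"

lemma opt_price_bar_has_deriv:
  assumes "c < q"
  shows "(pbar has_real_derivative opt_price_bar_deriv q) (at q)"
proof -
  define x where "x = pbar q"
  have x: "x \<in> {0<..<1}" "\<psi> x = c / q" "0 < \<psi> x" "0 < deriv \<psi> x"
    using opt_price_bar_char virt_val_opt_price_bar_pos deriv_virt_val_opt_price_bar_pos assms
    by (simp_all add: x_def)
  define D where "D = (0 * \<psi> x - c * deriv \<psi> x) / (\<psi> x * \<psi> x)"
  have "((\<lambda>v. c / \<psi> v) has_real_derivative D) (at (pbar q))"
    using x unfolding D_def x_def by (intro DERIV_divide DERIV_const virt_val_deriv) auto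
  then have "(pbar has_real_derivative inverse D) (at q)"
  proof (rule DERIV_inverse_function[where f = "\<lambda>v. c / \<psi> v" and g = pbar and a = c and b = "q + 1"])
    show "c / \<psi> (pbar y) = y" if "c < y" "y < q + 1" for y
      using opt_price_bar_char[of y] that c_pos by simp
  qed (use x assms c_pos opt_price_bar_isCont in \<open>auto simp: D_def x_def\<close>)
  moreover have "inverse D = opt_price_bar_deriv q"
    using x assms c_pos by (simp add: D_def opt_price_bar_deriv_def x_def[symmetric] field_simps)
  ultimately show ?thesis
    by simp
qed

lemma opt_price_bar_deriv_neg: "c < q \<Longrightarrow> opt_price_bar_deriv q < 0"
  using virt_val_opt_price_bar_pos[of q] deriv_virt_val_opt_price_bar_pos[of q] c_pos
  by (simp add: opt_price_bar_deriv_def divide_simps)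

definition tail_integral :: "real \<Rightarrow> real" where
  "tail_integral x = integral {x..1} (\<lambda>v. 1 - F v)"

lemma tail_integral_has_deriv:
  assumes "x \<in> {0<..<1}"
  shows "(tail_integral has_real_derivative - (1 - F x)) (at x)"
proof -
  have "(tail_integral has_real_derivative - (1 - F x)) (at x within {0..1})"
    unfolding tail_integral_def[abs_def] using assms
    by (intro integral_has_real_derivative' continuous_intros F_continuous_on) auto
  then show ?thesis
    using assms by (simp add: at_within_Icc_at)
qed

text \<open>Integration by parts against the antiderivative \<open>(v - x) * (F v - 1)\<close>, which vanishes
  at both ends.\<close>

lemma has_integral_mult_density:
  assumes x: "x \<in> {0<..<1}"
  shows "((\<lambda>v. (v - x) * f v) has_integral tail_integral x) {x..1}"
proof -
  define h where "h v = (v - x) * (F v - 1)" for v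
  have "continuous_on {x..1} h"
    unfolding h_def[abs_def] by (intro continuous_intros F_continuous_on)
  moreover have "(h has_vector_derivative (F v - 1) + f v * (v - x)) (at v)" if "v \<in> {x<..<1}" for v
  proof -
    have "v \<in> {0<..<1}"
      using that x by auto
    then have "(h has_real_derivative (1 - 0) * (F v - 1) + (f v - 0) * (v - x)) (at v)"
      unfolding h_def[abs_def] by (intro DERIV_mult DERIV_diff DERIV_ident DERIV_const F_dens)
    then show ?thesis
      by (simp add: has_real_derivative_iff_has_vector_derivative)
  qed
  ultimately have "((\<lambda>v. (F v - 1) + f v * (v - x)) has_integral h 1 - h x) {x..1}"
    using x by (intro fundamental_theorem_of_calculus_interior) auto
  moreover have "h 1 - h x = 0"
    by (simp add: h_def F_high)
  moreover have "((\<lambda>v. 1 - F v) has_integral tail_integral x) {x..1}"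
    unfolding tail_integral_def
    by (intro integrable_integral integrable_continuous_interval continuous_intros F_continuous_on)
  ultimately have "((\<lambda>v. ((F v - 1) + f v * (v - x)) + (1 - F v)) has_integral
      0 + tail_integral x) {x..1}"
    by (intro has_integral_add) simp_all
  then show ?thesis
    by (simp add: algebra_simps)
qed

lemma CS_eq_tail_integral:
  assumes "c < q"
  shows "CS F f c q = q * tail_integral (pbar q)"
proof -
  have q: "0 < q"
    using assms c_pos by simp
  have "((\<lambda>v. q * ((v - pbar q) * f v)) has_integral q * tail_integral (pbar q)) {pbar q..1}"
    using opt_price_bar_char[OF assms]
    by (intro has_integral_mult_right has_integral_mult_density) simp
  moreover have "opt_price F c q = q * pbar q"
    using q by (simp add: opt_price_bar_def)
  ultimately show ?thesis
    unfolding CS_def using q by (simp add: integral_unique algebra_simps)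
qed

definition marginal_surplus :: "real \<Rightarrow> real" where
  "marginal_surplus x = tail_integral x + (1 - F x) * \<psi> x / deriv \<psi> x"

definition marginal_surplus_deriv :: "real \<Rightarrow> real" where
  "marginal_surplus_deriv x =
     - f x * \<psi> x * (deriv \<psi> x - r x * deriv (deriv r) x) / (deriv \<psi> x)\<^sup>2"

lemma CS_has_deriv:
  assumes "c < q"
  shows "(CS F f c has_real_derivative marginal_surplus (pbar q)) (at q)"
proof -
  define x where "x = pbar q"
  have x: "x \<in> {0<..<1}" "0 < deriv \<psi> x"
    using opt_price_bar_char deriv_virt_val_opt_price_bar_pos assms by (simp_all add: x_def)
  have "((\<lambda>q. tail_integral (pbar q)) has_real_derivative - (1 - F x) * opt_price_bar_deriv q) (at q)"
    using x unfolding x_def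
    by (intro DERIV_chain2[where f = tail_integral and g = pbar] tail_integral_has_deriv
        opt_price_bar_has_deriv assms)
  then have "((\<lambda>q. q * tail_integral (pbar q)) has_real_derivative
      1 * tail_integral x + (- (1 - F x) * opt_price_bar_deriv q) * q) (at q)"
    unfolding x_def by (intro DERIV_mult DERIV_ident)
  moreover have "1 * tail_integral x + (- (1 - F x) * opt_price_bar_deriv q) * q = marginal_surplus x"
    using x assms c_pos
    by (simp add: marginal_surplus_def opt_price_bar_deriv_def x_def[symmetric] field_simps)
  ultimately have "((\<lambda>q. q * tail_integral (pbar q)) has_real_derivative
      marginal_surplus (pbar q)) (at q)"
    by (simp add: x_def)
  then show ?thesis
    by (rule has_field_derivative_transform_within_open[OF _ open_greaterThan])
       (use assms CS_eq_tail_integral in auto)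
qed

lemma marginal_surplus_has_deriv:
  assumes x: "x \<in> {0<..<1}" and "0 < \<psi> x"
  shows "(marginal_surplus has_real_derivative marginal_surplus_deriv x) (at x)"
proof -
  have "0 < deriv \<psi> x"
    using psi_mono assms by blast
  have "(marginal_surplus has_real_derivative
      - (1 - F x) + (((0 - f x) * \<psi> x + deriv \<psi> x * (1 - F x)) * deriv \<psi> x
        - ((1 - F x) * \<psi> x) * (- deriv (deriv r) x)) / (deriv \<psi> x * deriv \<psi> x)) (at x)"
    unfolding marginal_surplus_def[abs_def] using \<open>0 < deriv \<psi> x\<close>
    by (intro DERIV_add DERIV_divide DERIV_mult DERIV_diff DERIV_const
        tail_integral_has_deriv F_dens virt_val_deriv deriv_virt_val_deriv x) auto
  moreover have "- (1 - F x) + (((0 - f x) * \<psi> x + deriv \<psi> x * (1 - F x)) * deriv \<psi> x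
        - ((1 - F x) * \<psi> x) * (- deriv (deriv r) x)) / (deriv \<psi> x * deriv \<psi> x)
      = marginal_surplus_deriv x"
    unfolding one_minus_F_eq[OF x] marginal_surplus_deriv_def using \<open>0 < deriv \<psi> x\<close>
    by (simp add: field_simps power2_eq_square)
  ultimately show ?thesis
    by simp
qed

lemma marginal_surplus_deriv_nonpos_iff:
  assumes x: "x \<in> {0<..<1}" and "0 < \<psi> x"
  shows "marginal_surplus_deriv x \<le> 0 \<longleftrightarrow> r x * deriv (deriv r) x + deriv r x \<le> 1"
proof -
  define A where "A = f x * \<psi> x / (deriv \<psi> x)\<^sup>2"
  define B where "B = deriv \<psi> x - r x * deriv (deriv r) x"
  have "0 < A"
    using f_pos[OF x] psi_mono[OF assms] assms by (simp add: A_def)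
  moreover have "marginal_surplus_deriv x = - (A * B)"
    by (simp add: marginal_surplus_deriv_def A_def B_def)
  ultimately have "marginal_surplus_deriv x \<le> 0 \<longleftrightarrow> 0 \<le> B"
    by (simp add: zero_le_mult_iff)
  then show ?thesis
    using deriv_virt_val[OF x] by (simp add: B_def le_diff_eq)
qed

lemma marginal_surplus_opt_price_bar_has_deriv:
  assumes "c < q"
  shows "((\<lambda>q. marginal_surplus (pbar q)) has_real_derivative
           marginal_surplus_deriv (pbar q) * opt_price_bar_deriv q) (at q)"
  using assms opt_price_bar_char virt_val_opt_price_bar_pos
  by (intro DERIV_chain2[where f = marginal_surplus and g = pbar] marginal_surplus_has_deriv
      opt_price_bar_has_deriv) auto

end

theorem lemma3:
  fixes F f :: "real \<Rightarrow> real" and q_l q_h c :: real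
  assumes q_pos: "0 < q_l" and q_lt: "q_l < q_h"
    and c_pos: "0 < c" and c_lt: "c < q_l"
    and F_cont: "continuous_on UNIV F"
    and F_low: "\<And>v. v \<le> 0 \<Longrightarrow> F v = 0"
    and F_high: "\<And>v. 1 \<le> v \<Longrightarrow> F v = 1"
    and F_dens: "\<And>v. v \<in> {0<..<1} \<Longrightarrow> (F has_real_derivative f v) (at v)"
    and f_pos: "\<And>v. v \<in> {0<..<1} \<Longrightarrow> f v > 0"
    and f_diff: "\<And>v. v \<in> {0<..<1} \<Longrightarrow> f differentiable (at v)"
    and f'_diff: "\<And>v. v \<in> {0<..<1} \<Longrightarrow> (deriv f) differentiable (at v)"
    and f''_cont: "continuous_on {0<..<1} (deriv (deriv f))"
    and psi_mono: "\<And>v. v \<in> {0<..<1} \<Longrightarrow> virt_val F f v > 0 \<Longrightarrow>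
                     deriv (virt_val F f) v > 0"
    and p_unique: "\<And>q. q \<in> {q_l..q_h} \<Longrightarrow>
                     \<exists>!p. \<forall>p'. profit F c q p' \<le> profit F c q p"
  shows "convex_on {q_l..q_h} (CS F f c) \<longleftrightarrow>
    (\<forall>v \<in> {opt_price_bar F c q_h<..<opt_price_bar F c q_l}.
        inv_hazard F f v * deriv (deriv (inv_hazard F f)) v
          + deriv (inv_hazard F f) v \<le> 1)"
proof -
  interpret quality_pricing F f c
    using c_pos F_cont F_low F_high F_dens f_pos f_diff f'_diff psi_mono by unfold_locales
  have above_c: "c < q" if "q \<in> {q_l..q_h}" for q
    using that c_lt by simp
  have pbar_inside: "pbar q \<in> {0<..<1}" "0 < \<psi> (pbar q)" if "q \<in> {q_l<..<q_h}" for q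
    using that c_lt opt_price_bar_char virt_val_opt_price_bar_pos by auto
  have sign_change: "0 \<le> marginal_surplus_deriv (pbar q) * opt_price_bar_deriv q
      \<longleftrightarrow> marginal_surplus_deriv (pbar q) \<le> 0" if "q \<in> {q_l<..<q_h}" for q
    using that c_lt opt_price_bar_deriv_neg[of q] by (auto simp: zero_le_mult_iff)
  have "convex_on {q_l..q_h} (CS F f c) \<longleftrightarrow>
      (\<forall>q \<in> {q_l<..<q_h}. 0 \<le> marginal_surplus_deriv (pbar q) * opt_price_bar_deriv q)"
    by (intro convex_on_Icc_iff_deriv2_nonneg[where g' = "\<lambda>q. marginal_surplus (pbar q)"]
        CS_has_deriv marginal_surplus_opt_price_bar_has_deriv above_c)
  also have "\<dots> \<longleftrightarrow> (\<forall>q \<in> {q_l<..<q_h}. marginal_surplus_deriv (pbar q) \<le> 0)"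
    by (intro ball_cong refl sign_change)
  also have "\<dots> \<longleftrightarrow> (\<forall>q \<in> {q_l<..<q_h}.
      r (pbar q) * deriv (deriv r) (pbar q) + deriv r (pbar q) \<le> 1)"
    by (intro ball_cong refl marginal_surplus_deriv_nonpos_iff pbar_inside)
  also have "\<dots> \<longleftrightarrow> (\<forall>v \<in> pbar ` {q_l<..<q_h}. r v * deriv (deriv r) v + deriv r v \<le> 1)"
    by simp
  finally show ?thesis
    using opt_price_bar_image[OF c_lt q_lt] by simp
qed

end
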